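(* Let $V_1, V_2$ be jointly distributed binary random variables (values in $\{0,1\}$), and let $K = V_1 \oplus V_2$ (addition modulo $2$). Then the common-compression Slepian–Wolf rate for the pair $(V_1,V_2)$ satisfies $$R^{s.c.}_{SW} \le \max\big(H(K),\, H(V_1\mid K)\big).$$
   Context: Let $V_1,\dots,V_r$ be jointly distributed binary random variables with joint law $p(v_1,\dots,v_r)$, and for each $n$ let $(V_1[t],\dots,V_r[t])$, $t=1,\dots,n$, be i.i.d. copies; write $V_i^n$ for the column vector $(V_i[1],\dots,V_i[n])^t\in\mathbb{F}_2^n$. A rate $R\ge 0$ is achievable with a common compression matrix if for every $\epsilon>0$ and all sufficiently large $n$ there exist a single binary matrix $B$ of size $\lceil nR\rceil\times n$ and a decoding map $g$ such that $\Pr\big[g(BV_1^n,\dots,BV_r^n)\neq (V_1^n,\dots,V_r^n)\big]\le\epsilon$, where the products $BV_i^n$ are computed over $\mathbb{F}_2$. $R^{s.c.}_{SW}$ (Slepian–Wolf with the same compression matrices) denotes the infimum of all rates achievable with a common compression matrix. $H(\cdot)$ denotes Shannon entropy in bits. *)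

theory Defs
  imports Complex_Main "HOL-Library.FuncSet"
begin

text \<open>Binary values are encoded as bool (True = 1, False = 0); addition modulo 2 is (\<noteq>).
  A joint law of (V1,V2) is a function p :: bool \<Rightarrow> bool \<Rightarrow> real.\<close>

definition is_joint_pmf :: "(bool \<Rightarrow> bool \<Rightarrow> real) \<Rightarrow> bool" where
  "is_joint_pmf p \<longleftrightarrow> (\<forall>a b. p a b \<ge> 0) \<and> (\<Sum>a\<in>UNIV. \<Sum>b\<in>UNIV. p a b) = 1"

definition mat_vec_F2 :: "(nat \<Rightarrow> nat \<Rightarrow> bool) \<Rightarrow> nat \<Rightarrow> nat \<Rightarrow> (nat \<Rightarrow> bool) \<Rightarrow> (nat \<Rightarrow> bool)" where
  "mat_vec_F2 B m n v = (\<lambda>i. if i < m then odd (card {j\<in>{..<n}. B i j \<and> v j}) else False)"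

text \<open>Block error probability of the scheme (B, g) with m rows at blocklength n, for i.i.d.
  pairs (V1[t],V2[t]) with law p. A realization is x :: nat \<Rightarrow> bool \<times> bool on {..<n};
  V1^n = fst \<circ> x, V2^n = snd \<circ> x.\<close>
definition err_prob ::
  "(bool \<Rightarrow> bool \<Rightarrow> real) \<Rightarrow> nat \<Rightarrow> nat \<Rightarrow> (nat \<Rightarrow> nat \<Rightarrow> bool)
    \<Rightarrow> ((nat \<Rightarrow> bool) \<Rightarrow> (nat \<Rightarrow> bool) \<Rightarrow> (nat \<Rightarrow> bool \<times> bool)) \<Rightarrow> real" where
  "err_prob p n m B g =
     (\<Sum>x\<in>{..<n} \<rightarrow>\<^sub>E (UNIV :: (bool \<times> bool) set).
        (if (\<forall>t<n. g (mat_vec_F2 B m n (fst \<circ> x)) (mat_vec_F2 B m n (snd \<circ> x)) t = x t)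
         then 0 else (\<Prod>t<n. p (fst (x t)) (snd (x t)))))"

definition achievable_common :: "(bool \<Rightarrow> bool \<Rightarrow> real) \<Rightarrow> real \<Rightarrow> bool" where
  "achievable_common p R \<longleftrightarrow> R \<ge> 0 \<and>
     (\<forall>\<epsilon>>0. \<exists>N. \<forall>n\<ge>N. \<exists>B g. err_prob p n (nat \<lceil>real n * R\<rceil>) B g \<le> \<epsilon>)"

definition R_SW_sc :: "(bool \<Rightarrow> bool \<Rightarrow> real) \<Rightarrow> real" where
  "R_SW_sc p = Inf {R. achievable_common p R}"

definition plogp :: "real \<Rightarrow> real" where
  "plogp x = (if x = 0 then 0 else x * log 2 x)"

definition law_K :: "(bool \<Rightarrow> bool \<Rightarrow> real) \<Rightarrow> bool \<Rightarrow> real" where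
  "law_K p k = (\<Sum>a\<in>UNIV. \<Sum>b\<in>UNIV. if (a \<noteq> b) = k then p a b else 0)"

definition law_V1K :: "(bool \<Rightarrow> bool \<Rightarrow> real) \<Rightarrow> bool \<Rightarrow> bool \<Rightarrow> real" where
  "law_V1K p a k = (\<Sum>b\<in>UNIV. if (a \<noteq> b) = k then p a b else 0)"

definition entropy_K :: "(bool \<Rightarrow> bool \<Rightarrow> real) \<Rightarrow> real" where
  "entropy_K p = - (\<Sum>k\<in>UNIV. plogp (law_K p k))"

definition cond_entropy_V1_K :: "(bool \<Rightarrow> bool \<Rightarrow> real) \<Rightarrow> real" where
  "cond_entropy_V1_K p = - (\<Sum>a\<in>UNIV. \<Sum>k\<in>UNIV.
      (if law_V1K p a k = 0 then 0 else law_V1K p a k * log 2 (law_V1K p a k / law_K p k)))"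

end

theory Submission
  imports Defs
begin

(*
  The proof is a random-coding argument averaged over ALL binary m x n matrices B.
  (1) Linear algebra over F_2: for words u, v differing inside {..<n}, exactly a 2^-m
      fraction of the matrices satisfies B u = B v.  A union bound and a Markov-type count
      then bound the number of matrices under which a fixed word is "confusable" with a
      competitor of at least its own probability.
  (2) Since B is linear, B V1 xor B V2 = B K.  The decoder first picks the most probable key
      sequence K^n with the observed syndrome, then the most probable pair sequence with that
      key and the observed syndrome of V1^n.  It errs only if the true K^n or the true V1^n
      is confusable, so summing over B and using min(1,z) <= z^r (0 <= r <= 1) shows that
      some matrix has error at most 2^(-m r1) S1(r1)^n + 2^(-m r2) S2(r2)^n, with
      Gallager-type sums S1, S2.
  (3) 2^(-R r) S_i(r) equals 1 at r = 0 and has derivative (H - R) ln 2 there, where H is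
      H(K) resp. H(V1|K); so for R above both entropies both factors are < 1 for small
      r > 0, the error decays exponentially, every such R is achievable, and the infimum
      R_SW_sc is at most max(H(K), H(V1|K)).
*)

section \<open>Linear algebra over F_2\<close>

text \<open>Words of length n and m x n matrices over F_2, as extensional functions; these are the
  finite sets over which the random-coding average is taken.\<close>

definition words :: "nat \<Rightarrow> (nat \<Rightarrow> bool) set" where
  "words n = {..<n} \<rightarrow>\<^sub>E (UNIV :: bool set)"

definition matrices :: "nat \<Rightarrow> nat \<Rightarrow> (nat \<Rightarrow> nat \<Rightarrow> bool) set" where
  "matrices m n = {..<m} \<rightarrow>\<^sub>E words n"

lemma finite_words [simp]: "finite (words n)"
  by (simp add: words_def finite_PiE)

lemma card_words: "card (words n) = 2 ^ n"
  by (simp add: words_def card_PiE)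

lemma finite_matrices [simp]: "finite (matrices m n)"
  by (simp add: matrices_def finite_PiE)

lemma card_matrices: "card (matrices m n) = (2 ^ n) ^ m"
  by (simp add: matrices_def card_PiE card_words)

definition dot :: "nat \<Rightarrow> (nat \<Rightarrow> bool) \<Rightarrow> (nat \<Rightarrow> bool) \<Rightarrow> bool" where
  "dot n r u \<longleftrightarrow> odd (card {j\<in>{..<n}. r j \<and> u j})"

lemma dot_commute: "dot n r u = dot n u r"
  unfolding dot_def by (simp add: conj_commute)

lemma mat_vec_F2_eq_iff:
  "mat_vec_F2 B m n u = mat_vec_F2 B m n v \<longleftrightarrow> (\<forall>i<m. dot n (B i) u = dot n (B i) v)"
  by (auto simp: mat_vec_F2_def dot_def fun_eq_iff)

lemma mat_vec_cong:
  assumes "\<And>j. j < n \<Longrightarrow> u j = v j"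
  shows "mat_vec_F2 B m n u = mat_vec_F2 B m n v"
proof -
  have "{j\<in>{..<n}. B i j \<and> u j} = {j\<in>{..<n}. B i j \<and> v j}" for i
    using assms by auto
  then show ?thesis unfolding mat_vec_F2_def by simp
qed

text \<open>Linearity: the product with a sum u + v is the sum of the products.  The support of
  r and u + v is the symmetric difference of the supports of r, u and r, v.\<close>

lemma dot_xor: "dot n r (\<lambda>j. u j \<noteq> v j) \<longleftrightarrow> dot n r u \<noteq> dot n r v"
proof -
  define X where "X = {j\<in>{..<n}. r j \<and> u j}"
  define Y where "Y = {j\<in>{..<n}. r j \<and> v j}"
  have fin: "finite X" "finite Y" by (simp_all add: X_def Y_def)
  have symdiff: "{j\<in>{..<n}. r j \<and> (u j \<noteq> v j)} = (X \<union> Y) - (X \<inter> Y)"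
    by (auto simp: X_def Y_def)
  have "card X + card Y = card (X \<union> Y) + card (X \<inter> Y)"
    using card_Un_Int[OF fin] by simp
  moreover have "card ((X \<union> Y) - (X \<inter> Y)) = card (X \<union> Y) - card (X \<inter> Y)"
    using fin by (intro card_Diff_subset) auto
  moreover have "card (X \<inter> Y) \<le> card (X \<union> Y)"
    using fin by (intro card_mono) auto
  ultimately have "card X + card Y = card {j\<in>{..<n}. r j \<and> (u j \<noteq> v j)} + 2 * card (X \<inter> Y)"
    unfolding symdiff by simp
  then have "even (card X + card Y) \<longleftrightarrow> even (card {j\<in>{..<n}. r j \<and> (u j \<noteq> v j)})"
    by simp
  then show ?thesis unfolding dot_def X_def Y_def by (auto simp: even_add)
qed

lemma mat_vec_xor:
  "mat_vec_F2 B m n (\<lambda>j. u j \<noteq> v j) = (\<lambda>i. mat_vec_F2 B m n u i \<noteq> mat_vec_F2 B m n v i)"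
  using dot_xor[of n "B i" u v for i] by (auto simp: mat_vec_F2_def dot_def fun_eq_iff)

text \<open>A nonzero word d (nonzero at j0) is orthogonal to exactly half of all words:
  flipping coordinate j0 swaps the orthogonal and the non-orthogonal words.\<close>

lemma card_orthogonal:
  assumes "j0 < n" "d j0"
  shows "2 * card {r \<in> words n. \<not> dot n r d} = 2 ^ n"
proof -
  define flip where "flip = (\<lambda>r::nat\<Rightarrow>bool. r(j0 := \<not> r j0))"
  define G where "G = {r \<in> words n. \<not> dot n r d}"
  define H where "H = {r \<in> words n. dot n r d}"
  have unit: "dot n (\<lambda>j. j = j0) d"
  proof -
    have "{j\<in>{..<n}. j = j0 \<and> d j} = {j0}" using assms by auto
    then show ?thesis by (simp add: dot_def)
  qed
  have dot_flip: "dot n (flip r) d \<longleftrightarrow> \<not> dot n r d" for r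
  proof -
    have "flip r = (\<lambda>j. r j \<noteq> (j = j0))" by (auto simp: flip_def)
    then show ?thesis using dot_xor[of n d r "\<lambda>j. j = j0"] unit
      by (simp add: dot_commute[of n _ d])
  qed
  have flip_words: "r \<in> words n \<Longrightarrow> flip r \<in> words n" for r
    using assms(1) by (auto simp: words_def flip_def PiE_iff extensional_def)
  have flip_flip: "flip (flip r) = r" for r by (simp add: flip_def)
  have "bij_betw flip G H"
    by (rule bij_betw_byWitness[where f' = flip])
      (auto simp: G_def H_def flip_flip dot_flip flip_words)
  then have "card G = card H" by (rule bij_betw_same_card)
  moreover have "card G + card H = 2 ^ n"
  proof -
    have "G \<union> H = words n" "G \<inter> H = {}" by (auto simp: G_def H_def)
    then show ?thesis by (metis card_Un_disjoint card_words finite_Un finite_words)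
  qed
  ultimately show ?thesis by (simp add: G_def)
qed

text \<open>Hence two words differing at a coordinate j0 < n collide under exactly a 2^-m
  fraction of the m x n matrices: the rows can be chosen independently among the words
  orthogonal to u + v.\<close>

lemma card_colliding_matrices:
  assumes "j0 < n" "u j0 \<noteq> v j0"
  shows "card {B \<in> matrices m n. mat_vec_F2 B m n u = mat_vec_F2 B m n v} * 2 ^ m
           = card (matrices m n)"
proof -
  define d where "d = (\<lambda>j. u j \<noteq> v j)"
  define G where "G = {r \<in> words n. \<not> dot n r d}"
  have row: "dot n r u = dot n r v \<longleftrightarrow> \<not> dot n r d" for r
    using dot_xor[of n r u v] unfolding d_def by blast
  have "B \<in> matrices m n \<and> mat_vec_F2 B m n u = mat_vec_F2 B m n v \<longleftrightarrow> B \<in> {..<m} \<rightarrow>\<^sub>E G" for B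
  proof -
    have "B \<in> matrices m n \<longleftrightarrow> B \<in> extensional {..<m} \<and> (\<forall>i<m. B i \<in> words n)"
      unfolding matrices_def PiE_iff by blast
    moreover have "B \<in> {..<m} \<rightarrow>\<^sub>E G
        \<longleftrightarrow> B \<in> extensional {..<m} \<and> (\<forall>i<m. B i \<in> words n \<and> \<not> dot n (B i) d)"
      unfolding G_def PiE_iff by blast
    moreover have "mat_vec_F2 B m n u = mat_vec_F2 B m n v \<longleftrightarrow> (\<forall>i<m. \<not> dot n (B i) d)"
      by (simp only: mat_vec_F2_eq_iff row)
    ultimately show ?thesis by blast
  qed
  then have "{B \<in> matrices m n. mat_vec_F2 B m n u = mat_vec_F2 B m n v} = {..<m} \<rightarrow>\<^sub>E G"
    by blast
  then have "card {B \<in> matrices m n. mat_vec_F2 B m n u = mat_vec_F2 B m n v} = card G ^ m"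
    by (simp add: card_PiE)
  moreover have "2 * card G = 2 ^ n"
    unfolding G_def using assms by (intro card_orthogonal) (auto simp: d_def)
  moreover have "(card G * 2) ^ m = card G ^ m * 2 ^ m"
    by (rule power_mult_distrib)
  ultimately show ?thesis
    by (simp add: card_matrices mult.commute)
qed

section \<open>Counting confusable matrices\<close>

lemma card_heavy:
  fixes w :: "'a \<Rightarrow> real"
  assumes "finite S" "w0 > 0" "\<And>y. y \<in> S \<Longrightarrow> w y \<ge> 0"
  shows "real (card {y\<in>S. w y \<ge> w0}) \<le> (\<Sum>y\<in>S. w y) / w0"
proof -
  have "real (card {y\<in>S. w y \<ge> w0}) * w0 = (\<Sum>y\<in>{y\<in>S. w y \<ge> w0}. w0)" by simp
  also have "\<dots> \<le> (\<Sum>y\<in>{y\<in>S. w y \<ge> w0}. w y)" by (rule sum_mono) auto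
  also have "\<dots> \<le> (\<Sum>y\<in>S. w y)" by (rule sum_mono2) (use assms in auto)
  finally show ?thesis using assms(2) by (simp add: field_simps)
qed

text \<open>An ML-type decoder can only fail in this situation.\<close>

definition confusable ::
  "nat \<Rightarrow> nat \<Rightarrow> (nat \<Rightarrow> nat \<Rightarrow> bool) \<Rightarrow> 'a set \<Rightarrow> ('a \<Rightarrow> nat \<Rightarrow> bool) \<Rightarrow> ('a \<Rightarrow> real) \<Rightarrow> 'a \<Rightarrow> bool"
where
  "confusable m n B S f w x \<longleftrightarrow> (\<exists>y\<in>S. (\<exists>j<n. f y j \<noteq> f x j) \<and> w x \<le> w y
      \<and> mat_vec_F2 B m n (f y) = mat_vec_F2 B m n (f x))"

text \<open>Union bound over the heavy candidates, each colliding for a 2^-m fraction of the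
  matrices, together with the trivial bound by all matrices.\<close>

lemma card_confusable:
  fixes w :: "'a \<Rightarrow> real"
  assumes S: "finite S" and pos: "w x > 0" and nonneg: "\<And>y. y \<in> S \<Longrightarrow> w y \<ge> 0"
  shows "real (card {B \<in> matrices m n. confusable m n B S f w x})
           \<le> real (card (matrices m n)) * min 1 ((\<Sum>y\<in>S. w y) / w x / 2 ^ m)"
proof -
  define M where "M = real (card (matrices m n))"
  define E where "E = {B \<in> matrices m n. confusable m n B S f w x}"
  define T where "T = {y\<in>S. w x \<le> w y \<and> (\<exists>j<n. f y j \<noteq> f x j)}"
  define F where "F = (\<lambda>y. {B \<in> matrices m n. mat_vec_F2 B m n (f y) = mat_vec_F2 B m n (f x)})"
  have finT: "finite T" using S by (simp add: T_def)
  have card_F: "real (card (F y)) = M / 2 ^ m" if y: "y \<in> T" for y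
  proof -
    obtain j where "j < n" "f y j \<noteq> f x j" using y unfolding T_def by blast
    then have "card (F y) * 2 ^ m = card (matrices m n)"
      unfolding F_def by (rule card_colliding_matrices)
    then have "real (card (F y)) * 2 ^ m = M"
      unfolding M_def by (metis of_nat_mult of_nat_numeral of_nat_power)
    then show ?thesis by (simp add: field_simps)
  qed
  have "E \<subseteq> (\<Union>y\<in>T. F y)" by (auto simp: E_def T_def F_def confusable_def)
  then have "card E \<le> card (\<Union>y\<in>T. F y)"
    using finT by (intro card_mono) (auto simp: F_def)
  also have "\<dots> \<le> (\<Sum>y\<in>T. card (F y))"
    using finT by (rule card_UN_le)
  finally have "card E \<le> (\<Sum>y\<in>T. card (F y))" .
  then have "real (card E) \<le> (\<Sum>y\<in>T. real (card (F y)))"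
    by (metis of_nat_le_iff of_nat_sum)
  also have "\<dots> = real (card T) * (M / 2 ^ m)"
    using card_F by simp
  also have "\<dots> \<le> (\<Sum>y\<in>S. w y) / w x * (M / 2 ^ m)"
  proof (rule mult_right_mono)
    have "real (card T) \<le> real (card {y\<in>S. w y \<ge> w x})"
      using S by (intro of_nat_mono card_mono) (auto simp: T_def)
    also have "\<dots> \<le> (\<Sum>y\<in>S. w y) / w x"
      by (rule card_heavy[OF S pos]) (rule nonneg)
    finally show "real (card T) \<le> (\<Sum>y\<in>S. w y) / w x" .
  qed (simp add: M_def)
  finally have "real (card E) \<le> M * ((\<Sum>y\<in>S. w y) / w x / 2 ^ m)"
    by (simp add: field_simps)
  moreover have "real (card E) \<le> M"
    unfolding M_def E_def by (intro of_nat_mono card_mono) auto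
  ultimately show ?thesis unfolding M_def E_def by (simp add: min_def)
qed

section \<open>The source and its key sequence\<close>

definition xor_of :: "bool \<times> bool \<Rightarrow> bool" where
  "xor_of a \<longleftrightarrow> fst a \<noteq> snd a"

definition pairs :: "nat \<Rightarrow> (nat \<Rightarrow> bool \<times> bool) set" where
  "pairs n = {..<n} \<rightarrow>\<^sub>E (UNIV :: (bool \<times> bool) set)"

definition pmf_pair :: "(bool \<Rightarrow> bool \<Rightarrow> real) \<Rightarrow> bool \<times> bool \<Rightarrow> real" where
  "pmf_pair p a = p (fst a) (snd a)"

definition seq_prob :: "(bool \<Rightarrow> bool \<Rightarrow> real) \<Rightarrow> nat \<Rightarrow> (nat \<Rightarrow> bool \<times> bool) \<Rightarrow> real" where
  "seq_prob p n x = (\<Prod>t<n. pmf_pair p (x t))"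

definition key_prob :: "(bool \<Rightarrow> bool \<Rightarrow> real) \<Rightarrow> nat \<Rightarrow> (nat \<Rightarrow> bool) \<Rightarrow> real" where
  "key_prob p n k = (\<Prod>t<n. law_K p (k t))"

definition key_seq :: "(nat \<Rightarrow> bool \<times> bool) \<Rightarrow> nat \<Rightarrow> bool" where
  "key_seq x t = xor_of (x t)"

definition same_key :: "nat \<Rightarrow> (nat \<Rightarrow> bool \<times> bool) \<Rightarrow> (nat \<Rightarrow> bool \<times> bool) set" where
  "same_key n x = {y \<in> pairs n. \<forall>t<n. xor_of (y t) = xor_of (x t)}"

lemma finite_pairs [simp]: "finite (pairs n)"
  by (simp add: pairs_def finite_PiE)

lemma finite_same_key [simp]: "finite (same_key n x)"
  by (simp add: same_key_def)

lemma sum_bool_pairs: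
  "(\<Sum>a\<in>(UNIV :: (bool \<times> bool) set). f a)
     = f (True, True) + f (True, False) + f (False, True) + f (False, False)"
proof -
  have enum: "(UNIV :: (bool \<times> bool) set) = {(True, True), (True, False), (False, True), (False, False)}"
    by auto
  show ?thesis unfolding enum by (simp add: add.assoc)
qed

lemma law_K_simps:
  "law_K p True = p True False + p False True" "law_K p False = p True True + p False False"
  by (simp_all add: law_K_def UNIV_bool)

lemma pmf_pair_nonneg: "is_joint_pmf p \<Longrightarrow> pmf_pair p a \<ge> 0"
  by (simp add: is_joint_pmf_def pmf_pair_def)

lemma sum_pmf_pair: "is_joint_pmf p \<Longrightarrow> (\<Sum>a\<in>UNIV. pmf_pair p a) = 1"
  unfolding is_joint_pmf_def sum_bool_pairs pmf_pair_def by (simp add: UNIV_bool algebra_simps)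

lemma law_K_fiber: "(\<Sum>a\<in>{a. xor_of a = c}. pmf_pair p a) = law_K p c"
proof (cases c)
  case True
  then have "{a. xor_of a = c} = {(True, False), (False, True)}" by (auto simp: xor_of_def)
  then show ?thesis using True by (simp add: pmf_pair_def law_K_simps)
next
  case False
  then have "{a. xor_of a = c} = {(True, True), (False, False)}" by (auto simp: xor_of_def)
  then show ?thesis using False by (simp add: pmf_pair_def law_K_simps)
qed

lemma law_K_nonneg: "is_joint_pmf p \<Longrightarrow> law_K p c \<ge> 0"
  unfolding law_K_fiber[symmetric] by (rule sum_nonneg) (simp add: pmf_pair_nonneg)

lemma law_K_ge_pmf_pair: "is_joint_pmf p \<Longrightarrow> pmf_pair p a \<le> law_K p (xor_of a)"
  unfolding law_K_fiber[symmetric] by (rule member_le_sum) (auto simp: pmf_pair_nonneg)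

lemma sum_law_K: "is_joint_pmf p \<Longrightarrow> (\<Sum>c\<in>UNIV. law_K p c) = 1"
  using sum_pmf_pair[of p] unfolding sum_bool_pairs
  by (simp add: UNIV_bool law_K_simps pmf_pair_def algebra_simps)

lemma seq_prob_nonneg: "is_joint_pmf p \<Longrightarrow> seq_prob p n x \<ge> 0"
  unfolding seq_prob_def by (rule prod_nonneg) (simp add: pmf_pair_nonneg)

lemma key_prob_nonneg: "is_joint_pmf p \<Longrightarrow> key_prob p n k \<ge> 0"
  unfolding key_prob_def by (rule prod_nonneg) (simp add: law_K_nonneg)

lemma seq_prob_le_key_prob: "is_joint_pmf p \<Longrightarrow> seq_prob p n x \<le> key_prob p n (key_seq x)"
  unfolding seq_prob_def key_prob_def key_seq_def
  by (rule prod_mono) (simp add: pmf_pair_nonneg law_K_ge_pmf_pair)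

lemma sum_pairs_prod:
  fixes h :: "bool \<times> bool \<Rightarrow> real"
  shows "(\<Sum>x\<in>pairs n. \<Prod>t<n. h (x t)) = (\<Sum>a\<in>UNIV. h a) ^ n"
proof -
  have "(\<Prod>t<n. \<Sum>a\<in>UNIV. h a) = (\<Sum>x\<in>pairs n. \<Prod>t<n. h (x t))"
    unfolding pairs_def using prod_sum_PiE[of "{..<n}" "\<lambda>_. UNIV" "\<lambda>_ a. h a"] by simp
  then show ?thesis by simp
qed

lemma sum_key_prob:
  assumes "is_joint_pmf p"
  shows "(\<Sum>k\<in>words n. key_prob p n k) = 1"
proof -
  have "(\<Prod>t<n. \<Sum>c\<in>UNIV. law_K p c) = (\<Sum>k\<in>words n. key_prob p n k)"
    unfolding words_def key_prob_def using prod_sum_PiE[of "{..<n}" "\<lambda>_. UNIV" "\<lambda>_ c. law_K p c"]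
    by simp
  then show ?thesis using sum_law_K[OF assms] by simp
qed

lemma same_key_PiE: "same_key n x = PiE {..<n} (\<lambda>t. {a. xor_of a = xor_of (x t)})"
proof (rule set_eqI)
  fix y
  have "y \<in> same_key n x \<longleftrightarrow> y \<in> extensional {..<n} \<and> (\<forall>t<n. xor_of (y t) = xor_of (x t))"
    unfolding same_key_def pairs_def PiE_iff by simp
  also have "\<dots> \<longleftrightarrow> y \<in> PiE {..<n} (\<lambda>t. {a. xor_of a = xor_of (x t)})"
    unfolding PiE_iff by auto
  finally show "y \<in> same_key n x \<longleftrightarrow> y \<in> PiE {..<n} (\<lambda>t. {a. xor_of a = xor_of (x t)})" .
qed

lemma sum_same_key: "(\<Sum>y\<in>same_key n x. seq_prob p n y) = key_prob p n (key_seq x)"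
proof -
  have "(\<Prod>t<n. \<Sum>a\<in>{a. xor_of a = xor_of (x t)}. pmf_pair p a) = (\<Sum>y\<in>same_key n x. seq_prob p n y)"
    unfolding same_key_PiE seq_prob_def
    using prod_sum_PiE[of "{..<n}" "\<lambda>t. {a. xor_of a = xor_of (x t)}" "\<lambda>_ a. pmf_pair p a"]
    by simp
  then show ?thesis unfolding key_prob_def key_seq_def law_K_fiber by simp
qed

section \<open>Two-stage maximum-likelihood decoding\<close>

lemma arg_max_on_max:
  fixes w :: "'a \<Rightarrow> real"
  assumes "finite S" "x \<in> S"
  shows "arg_max_on w S \<in> S \<and> (\<forall>y\<in>S. w y \<le> w (arg_max_on w S))"
proof -
  have "Max (w ` S) \<in> w ` S" using assms by (intro Max_in) auto
  then obtain z where z: "z \<in> S" "w z = Max (w ` S)" by auto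
  then have "is_arg_max w (\<lambda>x. x \<in> S) z"
    using assms(1) by (simp add: is_arg_max_linorder)
  then have "is_arg_max w (\<lambda>x. x \<in> S) (arg_max_on w S)"
    unfolding arg_max_on_def arg_max_def by (rule someI)
  then show ?thesis by (simp add: is_arg_max_linorder)
qed

text \<open>From the syndromes s1 = B V1^n and s2 = B V2^n the decoder knows s1 + s2 = B K^n.\<close>

definition decoder ::
  "(bool \<Rightarrow> bool \<Rightarrow> real) \<Rightarrow> nat \<Rightarrow> nat \<Rightarrow> (nat \<Rightarrow> nat \<Rightarrow> bool)
     \<Rightarrow> (nat \<Rightarrow> bool) \<Rightarrow> (nat \<Rightarrow> bool) \<Rightarrow> (nat \<Rightarrow> bool \<times> bool)"
where
  "decoder p n m B s1 s2 =
     (let k = arg_max_on (key_prob p n)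
                {k \<in> words n. mat_vec_F2 B m n k = (\<lambda>i. s1 i \<noteq> s2 i)}
      in arg_max_on (seq_prob p n)
           {y \<in> pairs n. (\<forall>t<n. xor_of (y t) = k t) \<and> mat_vec_F2 B m n (fst \<circ> y) = s1})"

abbreviation key_confusable ::
  "(bool \<Rightarrow> bool \<Rightarrow> real) \<Rightarrow> nat \<Rightarrow> nat \<Rightarrow> (nat \<Rightarrow> nat \<Rightarrow> bool) \<Rightarrow> (nat \<Rightarrow> bool \<times> bool) \<Rightarrow> bool"
where
  "key_confusable p n m B x \<equiv> confusable m n B (words n) id (key_prob p n) (key_seq x)"

abbreviation value_confusable ::
  "(bool \<Rightarrow> bool \<Rightarrow> real) \<Rightarrow> nat \<Rightarrow> nat \<Rightarrow> (nat \<Rightarrow> nat \<Rightarrow> bool) \<Rightarrow> (nat \<Rightarrow> bool \<times> bool) \<Rightarrow> bool"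
where
  "value_confusable p n m B x \<equiv> confusable m n B (same_key n x) ((\<circ>) fst) (seq_prob p n) x"

lemma decoder_correct:
  assumes x: "x \<in> pairs n"
    and key: "\<not> key_confusable p n m B x" and val: "\<not> value_confusable p n m B x"
  shows "\<forall>t<n. decoder p n m B (mat_vec_F2 B m n (fst \<circ> x)) (mat_vec_F2 B m n (snd \<circ> x)) t = x t"
proof -
  define s1 where "s1 = mat_vec_F2 B m n (fst \<circ> x)"
  define s2 where "s2 = mat_vec_F2 B m n (snd \<circ> x)"
  define SK where "SK = {k \<in> words n. mat_vec_F2 B m n k = (\<lambda>i. s1 i \<noteq> s2 i)}"
  define kh where "kh = arg_max_on (key_prob p n) SK"
  define SX where "SX = {y \<in> pairs n. (\<forall>t<n. xor_of (y t) = kh t) \<and> mat_vec_F2 B m n (fst \<circ> y) = s1}"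
  define xh where "xh = arg_max_on (seq_prob p n) SX"
  have syndrome_key: "mat_vec_F2 B m n (key_seq x) = (\<lambda>i. s1 i \<noteq> s2 i)"
    unfolding s1_def s2_def key_seq_def xor_of_def
    using mat_vec_xor[of B m n "fst \<circ> x" "snd \<circ> x"] by simp
  txt \<open>The true key sequence (restricted to {..<n}) is a candidate, so kh is no less
    probable; not being confusable, the true key sequence must coincide with kh.\<close>
  have "restrict (key_seq x) {..<n} \<in> SK"
    using syndrome_key mat_vec_cong[of n "restrict (key_seq x) {..<n}" "key_seq x"]
    by (simp add: SK_def words_def)
  moreover have "finite SK" by (simp add: SK_def)
  moreover have "key_prob p n (restrict (key_seq x) {..<n}) = key_prob p n (key_seq x)"
    by (simp add: key_prob_def)
  ultimately have kh: "kh \<in> SK" "key_prob p n (key_seq x) \<le> key_prob p n kh"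
    using arg_max_on_max[of SK _ "key_prob p n"] unfolding kh_def by metis+
  have kh_eq: "\<forall>j<n. kh j = key_seq x j"
    using key kh syndrome_key by (auto simp: confusable_def SK_def)
  txt \<open>Then x itself is a candidate of the second stage, and the same argument applies.\<close>
  have "x \<in> SX" using x kh_eq by (simp add: SX_def s1_def key_seq_def)
  moreover have "finite SX" by (simp add: SX_def)
  ultimately have xh: "xh \<in> SX" "seq_prob p n x \<le> seq_prob p n xh"
    using arg_max_on_max[of SX x "seq_prob p n"] by (auto simp: xh_def)
  then have "xh \<in> same_key n x" using kh_eq by (auto simp: SX_def same_key_def key_seq_def)
  then have fst_eq: "\<forall>j<n. fst (xh j) = fst (x j)"
    using val xh by (auto simp: confusable_def SX_def s1_def)
  have "xh t = x t" if "t < n" for t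
    using fst_eq \<open>xh \<in> same_key n x\<close> that
    by (auto simp: same_key_def xor_of_def prod_eq_iff)
  moreover have "decoder p n m B s1 s2 = xh"
    by (simp add: decoder_def xh_def SX_def kh_def SK_def)
  ultimately show ?thesis by (simp add: s1_def s2_def)
qed

section \<open>Averaging the error probability over all matrices\<close>

lemma err_prob_le_confusable:
  assumes pmf: "is_joint_pmf p"
  shows "err_prob p n m B (decoder p n m B)
     \<le> (\<Sum>x\<in>pairs n. seq_prob p n x
          * (of_bool (key_confusable p n m B x) + of_bool (value_confusable p n m B x)))"
  unfolding err_prob_def pairs_def[symmetric]
proof (rule sum_mono)
  fix x assume x: "x \<in> pairs n"
  let ?ok = "\<forall>t<n. decoder p n m B (mat_vec_F2 B m n (fst \<circ> x)) (mat_vec_F2 B m n (snd \<circ> x)) t = x t"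
  let ?c = "of_bool (key_confusable p n m B x) + of_bool (value_confusable p n m B x) :: real"
  have q: "(\<Prod>t<n. p (fst (x t)) (snd (x t))) = seq_prob p n x"
    by (simp add: seq_prob_def pmf_pair_def)
  have nonneg: "0 \<le> seq_prob p n x" by (rule seq_prob_nonneg[OF pmf])
  show "(if ?ok then 0 else \<Prod>t<n. p (fst (x t)) (snd (x t))) \<le> seq_prob p n x * ?c"
  proof (cases ?ok)
    case True
    then show ?thesis using nonneg by simp
  next
    case False
    then have "1 \<le> ?c" using decoder_correct[OF x] by auto
    then have "seq_prob p n x * 1 \<le> seq_prob p n x * ?c" using nonneg by (rule mult_left_mono)
    then show ?thesis unfolding if_not_P[OF False] q by simp
  qed
qed

text \<open>The interpolation min(1, z) \<le> z^r between the trivial and the union bound.\<close>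

lemma min_one_le_powr:
  fixes z r :: real
  assumes "0 \<le> z" "0 \<le> r" "r \<le> 1"
  shows "min 1 z \<le> z powr r"
proof (cases "z \<le> 1")
  case True
  show ?thesis
  proof (cases "z = 0")
    case False
    then have "z powr 1 \<le> z powr r" using assms True by (intro powr_mono') auto
    then show ?thesis using assms by simp
  qed simp
next
  case False
  then show ?thesis using assms by (simp add: ge_one_powr_ge_zero)
qed

lemma powr_scaled_ratio:
  fixes a b r :: real
  assumes "0 < a" "0 < b"
  shows "(a / b / 2 ^ m) powr r = 2 powr (- (real m * r)) * a powr r * b powr (- r)"
proof -
  have "(a / b / 2 ^ m) powr r = a powr r / b powr r / (2 ^ m) powr r"
    using assms by (simp add: powr_divide powr_mult)
  also have "(2 ^ m :: real) powr r = 2 powr (real m * r)"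
    by (simp add: powr_realpow[symmetric] powr_powr)
  finally show ?thesis by (simp add: powr_minus divide_inverse)
qed

lemma card_key_confusable:
  assumes pmf: "is_joint_pmf p" and pos: "seq_prob p n x > 0" and r: "0 \<le> r" "r \<le> 1"
  shows "real (card {B \<in> matrices m n. key_confusable p n m B x})
           \<le> real (card (matrices m n)) * (2 powr (- (real m * r)) * key_prob p n (key_seq x) powr (- r))"
proof -
  let ?L = "key_prob p n (key_seq x)"
  have L: "?L > 0" using pos seq_prob_le_key_prob[OF pmf] by (rule less_le_trans)
  have "real (card {B \<in> matrices m n. key_confusable p n m B x})
          \<le> real (card (matrices m n)) * min 1 (1 / ?L / 2 ^ m)"
    using card_confusable[where S = "words n" and w = "key_prob p n" and x = "key_seq x" and f = id
        and m = m and n = n]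
    by (simp add: L key_prob_nonneg[OF pmf] sum_key_prob[OF pmf])
  also have "\<dots> \<le> real (card (matrices m n)) * (1 / ?L / 2 ^ m) powr r"
    using L r by (intro mult_left_mono min_one_le_powr) auto
  also have "\<dots> = real (card (matrices m n)) * (2 powr (- (real m * r)) * ?L powr (- r))"
    using powr_scaled_ratio[of 1 ?L m r] L by simp
  finally show ?thesis .
qed

lemma card_value_confusable:
  assumes pmf: "is_joint_pmf p" and pos: "seq_prob p n x > 0" and r: "0 \<le> r" "r \<le> 1"
  shows "real (card {B \<in> matrices m n. value_confusable p n m B x})
           \<le> real (card (matrices m n))
              * (2 powr (- (real m * r)) * key_prob p n (key_seq x) powr r * seq_prob p n x powr (- r))"
proof -
  let ?L = "key_prob p n (key_seq x)" and ?Q = "seq_prob p n x"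
  have L: "?L > 0" using pos seq_prob_le_key_prob[OF pmf] by (rule less_le_trans)
  have "real (card {B \<in> matrices m n. value_confusable p n m B x})
          \<le> real (card (matrices m n)) * min 1 (?L / ?Q / 2 ^ m)"
    using card_confusable[where S = "same_key n x" and w = "seq_prob p n" and x = x and f = "(\<circ>) fst"
        and m = m and n = n]
    by (simp add: pos seq_prob_nonneg[OF pmf] sum_same_key)
  also have "\<dots> \<le> real (card (matrices m n)) * (?L / ?Q / 2 ^ m) powr r"
    using L pos r by (intro mult_left_mono min_one_le_powr) auto
  also have "\<dots> = real (card (matrices m n)) * (2 powr (- (real m * r)) * ?L powr r * ?Q powr (- r))"
    using powr_scaled_ratio[of ?L ?Q m r] L pos by simp
  finally show ?thesis .
qed

definition gallager_key :: "(bool \<Rightarrow> bool \<Rightarrow> real) \<Rightarrow> real \<Rightarrow> real" where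
  "gallager_key p r = (\<Sum>a\<in>UNIV. pmf_pair p a * law_K p (xor_of a) powr (- r))"

definition gallager_value :: "(bool \<Rightarrow> bool \<Rightarrow> real) \<Rightarrow> real \<Rightarrow> real" where
  "gallager_value p r = (\<Sum>a\<in>UNIV. pmf_pair p a powr (1 - r) * law_K p (xor_of a) powr r)"

lemma weighted_bad_matrices:
  assumes pmf: "is_joint_pmf p" and r1: "0 \<le> r1" "r1 \<le> 1" and r2: "0 \<le> r2" "r2 \<le> 1"
  shows "seq_prob p n x * (real (card {B \<in> matrices m n. key_confusable p n m B x})
                            + real (card {B \<in> matrices m n. value_confusable p n m B x}))
    \<le> real (card (matrices m n)) *
       (2 powr (- (real m * r1)) * (\<Prod>t<n. pmf_pair p (x t) * law_K p (xor_of (x t)) powr (- r1))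
      + 2 powr (- (real m * r2)) * (\<Prod>t<n. pmf_pair p (x t) powr (1 - r2) * law_K p (xor_of (x t)) powr r2))"
    (is "?Q * (?k + ?v) \<le> ?C * (?b1 * ?P1 + ?b2 * ?P2)")
proof (cases "?Q = 0")
  case True
  have "0 \<le> ?P1" "0 \<le> ?P2"
    by (intro prod_nonneg mult_nonneg_nonneg pmf_pair_nonneg[OF pmf]; simp)+
  then show ?thesis using True by simp
next
  case False
  let ?L = "key_prob p n (key_seq x)"
  have Q: "?Q > 0" using False seq_prob_nonneg[OF pmf, of n x] by simp
  have L: "?L > 0" using Q seq_prob_le_key_prob[OF pmf] by (rule less_le_trans)
  have P1: "?P1 = ?Q * ?L powr (- r1)"
    unfolding seq_prob_def key_prob_def key_seq_def
    by (simp add: prod.distrib prod_powr_distrib law_K_nonneg[OF pmf])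
  have P2: "?P2 = ?Q * (?L powr r2 * ?Q powr (- r2))"
  proof -
    have "?P2 = ?Q powr (1 - r2) * ?L powr r2"
      unfolding seq_prob_def key_prob_def key_seq_def
      by (simp add: prod.distrib prod_powr_distrib law_K_nonneg[OF pmf] pmf_pair_nonneg[OF pmf])
    also have "?Q powr (1 - r2) = ?Q * ?Q powr (- r2)"
      using Q by (simp add: powr_diff powr_minus_divide)
    finally show ?thesis by simp
  qed
  have "?Q * (?k + ?v) \<le> ?Q * (?C * (?b1 * ?L powr (- r1)) + ?C * (?b2 * ?L powr r2 * ?Q powr (- r2)))"
    using card_key_confusable[OF pmf Q r1, of m] card_value_confusable[OF pmf Q r2, of m] Q
    by (intro mult_left_mono add_mono) auto
  also have "\<dots> = ?C * (?b1 * ?P1 + ?b2 * ?P2)"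
    unfolding P1 P2 by (simp add: algebra_simps)
  finally show ?thesis .
qed

lemma sum_of_bool_card: "finite A \<Longrightarrow> (\<Sum>B\<in>A. of_bool (P B) :: real) = real (card {B\<in>A. P B})"
  by (simp add: Int_def)

lemma sum_err_prob_matrices:
  assumes pmf: "is_joint_pmf p" and r1: "0 \<le> r1" "r1 \<le> 1" and r2: "0 \<le> r2" "r2 \<le> 1"
  shows "(\<Sum>B\<in>matrices m n. err_prob p n m B (decoder p n m B))
    \<le> real (card (matrices m n)) * (2 powr (- (real m * r1)) * gallager_key p r1 ^ n
                                   + 2 powr (- (real m * r2)) * gallager_value p r2 ^ n)"
proof -
  let ?C = "real (card (matrices m n))"
  have "(\<Sum>B\<in>matrices m n. err_prob p n m B (decoder p n m B))
      \<le> (\<Sum>B\<in>matrices m n. \<Sum>x\<in>pairs n. seq_prob p n x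
          * (of_bool (key_confusable p n m B x) + of_bool (value_confusable p n m B x)))"
    by (rule sum_mono) (rule err_prob_le_confusable[OF pmf])
  also have "\<dots> = (\<Sum>x\<in>pairs n. \<Sum>B\<in>matrices m n. seq_prob p n x
          * (of_bool (key_confusable p n m B x) + of_bool (value_confusable p n m B x)))"
    by (rule sum.swap)
  also have "\<dots> = (\<Sum>x\<in>pairs n. seq_prob p n x
          * (real (card {B \<in> matrices m n. key_confusable p n m B x})
             + real (card {B \<in> matrices m n. value_confusable p n m B x})))"
    by (simp add: sum_distrib_left[symmetric] sum.distrib sum_of_bool_card del: sum_of_bool_eq)
  also have "\<dots> \<le> (\<Sum>x\<in>pairs n. ?C *
       (2 powr (- (real m * r1)) * (\<Prod>t<n. pmf_pair p (x t) * law_K p (xor_of (x t)) powr (- r1))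
      + 2 powr (- (real m * r2)) * (\<Prod>t<n. pmf_pair p (x t) powr (1 - r2) * law_K p (xor_of (x t)) powr r2)))"
    by (rule sum_mono) (rule weighted_bad_matrices[OF pmf r1 r2])
  also have "\<dots> = ?C * (2 powr (- (real m * r1))
            * (\<Sum>x\<in>pairs n. \<Prod>t<n. pmf_pair p (x t) * law_K p (xor_of (x t)) powr (- r1))
        + 2 powr (- (real m * r2))
            * (\<Sum>x\<in>pairs n. \<Prod>t<n. pmf_pair p (x t) powr (1 - r2) * law_K p (xor_of (x t)) powr r2))"
    by (simp add: sum_distrib_left sum.distrib distrib_left)
  also have "\<dots> = ?C * (2 powr (- (real m * r1)) * gallager_key p r1 ^ n
                      + 2 powr (- (real m * r2)) * gallager_value p r2 ^ n)"
    using sum_pairs_prod[of "\<lambda>a. pmf_pair p a * law_K p (xor_of a) powr (- r1)" n]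
      sum_pairs_prod[of "\<lambda>a. pmf_pair p a powr (1 - r2) * law_K p (xor_of a) powr r2" n]
    unfolding gallager_key_def gallager_value_def by simp
  finally show ?thesis .
qed

text \<open>Some matrix is at least as good as the average.\<close>

lemma exists_good_code:
  assumes pmf: "is_joint_pmf p" and r1: "0 \<le> r1" "r1 \<le> 1" and r2: "0 \<le> r2" "r2 \<le> 1"
  shows "\<exists>B g. err_prob p n m B g \<le> 2 powr (- (real m * r1)) * gallager_key p r1 ^ n
                                     + 2 powr (- (real m * r2)) * gallager_value p r2 ^ n"
proof (rule ccontr)
  let ?b = "2 powr (- (real m * r1)) * gallager_key p r1 ^ n + 2 powr (- (real m * r2)) * gallager_value p r2 ^ n"
  assume "\<not> ?thesis"
  then have worse: "?b < err_prob p n m B (decoder p n m B)" for B by (meson not_le)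
  have "matrices m n \<noteq> {}"
    using card_matrices[of m n] by (metis card.empty power_not_zero zero_neq_numeral)
  then have "(\<Sum>B\<in>matrices m n. ?b) < (\<Sum>B\<in>matrices m n. err_prob p n m B (decoder p n m B))"
    using worse by (intro sum_strict_mono) auto
  then show False using sum_err_prob_matrices[OF pmf r1 r2, where m = m and n = n] by simp
qed

section \<open>Error exponents\<close>

text \<open>A tilted sum equal to 1 at r = 0 whose derivative there, (sum w c) - R ln 2, is negative,
  drops below 1 for some small r in (0, 1].\<close>

lemma exponent_below_one:
  fixes w c :: "'a \<Rightarrow> real"
  assumes "finite A" and sum1: "(\<Sum>a\<in>A. w a) = 1" and slope: "(\<Sum>a\<in>A. w a * c a) < R * ln 2"
  shows "\<exists>r. 0 < r \<and> r \<le> 1 \<and> 2 powr (- (R * r)) * (\<Sum>a\<in>A. w a * exp (r * c a)) < 1"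
proof -
  define f where "f r = exp (- (R * r) * ln 2) * (\<Sum>a\<in>A. w a * exp (r * c a))" for r
  have "(f has_real_derivative (- (R * ln 2) + (\<Sum>a\<in>A. w a * c a))) (at 0)"
    unfolding f_def by (auto intro!: derivative_eq_intros simp: sum1 mult.commute)
  moreover have "- (R * ln 2) + (\<Sum>a\<in>A. w a * c a) < 0" using slope by simp
  ultimately obtain d where d: "d > 0" "\<And>h. 0 < h \<Longrightarrow> h < d \<Longrightarrow> f (0 + h) < f 0"
    using DERIV_neg_dec_right by blast
  define r where "r = min (d / 2) 1"
  have r: "0 < r" "r < d" "r \<le> 1" using d(1) by (auto simp: r_def)
  have "f r < 1" using d(2)[OF r(1,2)] by (simp add: f_def sum1)
  then show ?thesis using r by (auto simp: f_def powr_def)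
qed

lemma gallager_key_exp:
  assumes pmf: "is_joint_pmf p"
  shows "gallager_key p r = (\<Sum>a\<in>UNIV. pmf_pair p a * exp (r * - ln (law_K p (xor_of a))))"
  unfolding gallager_key_def
proof (rule sum.cong)
  fix a :: "bool \<times> bool"
  show "pmf_pair p a * law_K p (xor_of a) powr (- r) = pmf_pair p a * exp (r * - ln (law_K p (xor_of a)))"
  proof (cases "pmf_pair p a = 0")
    case False
    then have "law_K p (xor_of a) > 0"
      using pmf_pair_nonneg[OF pmf, of a] law_K_ge_pmf_pair[OF pmf, of a] by linarith
    then show ?thesis by (simp add: powr_def)
  qed simp
qed simp

lemma gallager_value_exp:
  assumes pmf: "is_joint_pmf p"
  shows "gallager_value p r
           = (\<Sum>a\<in>UNIV. pmf_pair p a * exp (r * (ln (law_K p (xor_of a)) - ln (pmf_pair p a))))"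
  unfolding gallager_value_def
proof (rule sum.cong)
  fix a :: "bool \<times> bool"
  let ?P = "pmf_pair p a" and ?L = "law_K p (xor_of a)"
  show "?P powr (1 - r) * ?L powr r = ?P * exp (r * (ln ?L - ln ?P))"
  proof (cases "?P = 0")
    case False
    then have P: "?P > 0" using pmf_pair_nonneg[OF pmf, of a] by simp
    then have L: "?L > 0" using law_K_ge_pmf_pair[OF pmf, of a] by linarith
    have "?P powr (1 - r) * ?L powr r = exp ((1 - r) * ln ?P) * exp (r * ln ?L)"
      using P L by (simp add: powr_def)
    also have "\<dots> = exp (ln ?P) * exp (r * (ln ?L - ln ?P))"
      by (simp add: exp_add[symmetric] algebra_simps)
    finally show ?thesis using P by simp
  qed simp
qed simp

text \<open>Both entropies are the slopes of the tilted sums at r = 0.\<close>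

lemma entropy_K_ln:
  "entropy_K p * ln 2 = (\<Sum>a\<in>UNIV. pmf_pair p a * - ln (law_K p (xor_of a)))"
proof -
  have plogp_ln: "plogp x * ln 2 = x * ln x" for x by (simp add: plogp_def log_def)
  have "entropy_K p * ln 2 = - (\<Sum>c\<in>UNIV. law_K p c * ln (law_K p c))"
    unfolding entropy_K_def by (simp add: sum_distrib_right plogp_ln)
  also have "\<dots> = (\<Sum>a\<in>UNIV. pmf_pair p a * - ln (law_K p (xor_of a)))"
    unfolding sum_bool_pairs
    by (simp add: UNIV_bool xor_of_def pmf_pair_def law_K_simps algebra_simps)
  finally show ?thesis .
qed

lemma cond_entropy_V1_K_ln:
  assumes pmf: "is_joint_pmf p"
  shows "cond_entropy_V1_K p * ln 2
           = (\<Sum>a\<in>UNIV. pmf_pair p a * (ln (law_K p (xor_of a)) - ln (pmf_pair p a)))"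
proof -
  have weighted_log: "(if x = 0 then 0 else x * log 2 (x / L)) * ln 2 = x * (ln x - ln L)"
    if "0 \<le> x" "x \<le> L" for x L :: real
    using that by (cases "x = 0") (auto simp: log_def ln_div)
  have nn: "p a b \<ge> 0" for a b using pmf by (simp add: is_joint_pmf_def)
  have le: "p True False \<le> law_K p True" "p False True \<le> law_K p True"
     "p True True \<le> law_K p False" "p False False \<le> law_K p False"
    using nn by (simp_all add: law_K_simps)
  have V1K: "law_V1K p True True = p True False" "law_V1K p True False = p True True"
    "law_V1K p False True = p False True" "law_V1K p False False = p False False"
    by (simp_all add: law_V1K_def UNIV_bool)
  have sum_bool2: "(\<Sum>a\<in>UNIV. \<Sum>k\<in>UNIV. G a k) = G True True + G True False + G False True + G False False"
    for G :: "bool \<Rightarrow> bool \<Rightarrow> real" by (simp add: UNIV_bool add_ac)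
  have "cond_entropy_V1_K p * ln 2 = - (\<Sum>a\<in>UNIV. \<Sum>k\<in>UNIV.
      (if law_V1K p a k = 0 then 0 else law_V1K p a k * log 2 (law_V1K p a k / law_K p k)) * ln 2)"
    unfolding cond_entropy_V1_K_def by (simp add: sum_distrib_right)
  also have "\<dots> = - (p True False * (ln (p True False) - ln (law_K p True))
       + p True True * (ln (p True True) - ln (law_K p False))
       + p False True * (ln (p False True) - ln (law_K p True))
       + p False False * (ln (p False False) - ln (law_K p False)))"
    unfolding sum_bool2 V1K
    using weighted_log[OF nn le(1)] weighted_log[OF nn le(2)] weighted_log[OF nn le(3)]
      weighted_log[OF nn le(4)]
    by (simp only:)
  also have "\<dots> = (\<Sum>a\<in>UNIV. pmf_pair p a * (ln (law_K p (xor_of a)) - ln (pmf_pair p a)))"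
    unfolding sum_bool_pairs by (simp add: xor_of_def pmf_pair_def algebra_simps del: law_K_simps)
  finally show ?thesis .
qed

lemma key_exponent:
  assumes pmf: "is_joint_pmf p" and R: "entropy_K p < R"
  shows "\<exists>r. 0 < r \<and> r \<le> 1 \<and> 2 powr (- (R * r)) * gallager_key p r < 1"
proof -
  have "entropy_K p * ln 2 < R * ln 2" using R by simp
  then show ?thesis
    using exponent_below_one[where A = UNIV and w = "pmf_pair p"
        and c = "\<lambda>a. - ln (law_K p (xor_of a))" and R = R]
    by (simp add: sum_pmf_pair[OF pmf] entropy_K_ln gallager_key_exp[OF pmf])
qed

lemma value_exponent:
  assumes pmf: "is_joint_pmf p" and R: "cond_entropy_V1_K p < R"
  shows "\<exists>r. 0 < r \<and> r \<le> 1 \<and> 2 powr (- (R * r)) * gallager_value p r < 1"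
proof -
  have "cond_entropy_V1_K p * ln 2 < R * ln 2" using R by simp
  then show ?thesis
    using exponent_below_one[where A = UNIV and w = "pmf_pair p"
        and c = "\<lambda>a. ln (law_K p (xor_of a)) - ln (pmf_pair p a)" and R = R]
    by (simp add: sum_pmf_pair[OF pmf] cond_entropy_V1_K_ln[OF pmf] gallager_value_exp[OF pmf])
qed

section \<open>Achievable rates\<close>

lemma achievable_if_exponential_decay:
  assumes "0 \<le> R" "0 \<le> a" "a < 1"
    and decay: "\<And>n. \<exists>B g. err_prob p n (nat \<lceil>real n * R\<rceil>) B g \<le> 2 * a ^ n"
  shows "achievable_common p R"
  unfolding achievable_common_def
proof (intro conjI allI impI)
  fix \<epsilon> :: real assume "0 < \<epsilon>"
  have "(\<lambda>n. 2 * a ^ n) \<longlonglongrightarrow> 0"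
    using assms by (intro tendsto_mult_right_zero LIMSEQ_power_zero) auto
  then have "eventually (\<lambda>n. 2 * a ^ n < \<epsilon>) sequentially"
    using \<open>0 < \<epsilon>\<close> by (rule order_tendstoD)
  then obtain N where N: "\<And>n. N \<le> n \<Longrightarrow> 2 * a ^ n < \<epsilon>"
    by (auto simp: eventually_sequentially)
  show "\<exists>N. \<forall>n\<ge>N. \<exists>B g. err_prob p n (nat \<lceil>real n * R\<rceil>) B g \<le> \<epsilon>"
    using decay N by (meson less_imp_le order_trans)
qed (rule assms(1))

lemma rate_power_bound:
  assumes S: "0 \<le> S" and r: "0 < r" and m: "real n * R \<le> real m"
  shows "2 powr (- (real m * r)) * S ^ n \<le> (2 powr (- (R * r)) * S) ^ n"
proof -
  have "2 powr (- (real m * r)) \<le> 2 powr (- (real n * R * r))"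
    using m r by (intro powr_mono) (auto intro: mult_right_mono)
  also have "(2::real) powr (- (real n * R * r)) = (2 powr (- (R * r))) ^ n"
    by (simp add: powr_realpow[symmetric] powr_powr algebra_simps)
  finally show ?thesis using S by (simp add: power_mult_distrib mult_right_mono)
qed

lemma gallager_key_nonneg: "is_joint_pmf p \<Longrightarrow> gallager_key p r \<ge> 0"
  unfolding gallager_key_def by (intro sum_nonneg mult_nonneg_nonneg pmf_pair_nonneg) simp_all

lemma gallager_value_nonneg: "gallager_value p r \<ge> 0"
  unfolding gallager_value_def by (intro sum_nonneg mult_nonneg_nonneg) simp_all

theorem achievable_above_entropies:
  assumes pmf: "is_joint_pmf p" and "entropy_K p < R" "cond_entropy_V1_K p < R" "0 \<le> R"
  shows "achievable_common p R"
proof -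
  obtain r1 where r1: "0 < r1" "r1 \<le> 1" "2 powr (- (R * r1)) * gallager_key p r1 < 1"
    using key_exponent[OF pmf assms(2)] by blast
  obtain r2 where r2: "0 < r2" "r2 \<le> 1" "2 powr (- (R * r2)) * gallager_value p r2 < 1"
    using value_exponent[OF pmf assms(3)] by blast
  define a1 where "a1 = 2 powr (- (R * r1)) * gallager_key p r1"
  define a2 where "a2 = 2 powr (- (R * r2)) * gallager_value p r2"
  have a: "0 \<le> a1" "0 \<le> a2" "max a1 a2 < 1"
    using r1 r2 gallager_key_nonneg[OF pmf] gallager_value_nonneg by (auto simp: a1_def a2_def)
  show ?thesis
  proof (rule achievable_if_exponential_decay[OF assms(4) _ a(3)])
    fix n
    define m where "m = nat \<lceil>real n * R\<rceil>"
    have m: "real n * R \<le> real m" unfolding m_def by linarith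
    obtain B g where "err_prob p n m B g \<le> 2 powr (- (real m * r1)) * gallager_key p r1 ^ n
                                           + 2 powr (- (real m * r2)) * gallager_value p r2 ^ n"
      using exists_good_code[OF pmf _ r1(2) _ r2(2)] r1(1) r2(1) by fastforce
    also have "\<dots> \<le> a1 ^ n + a2 ^ n"
      unfolding a1_def a2_def using r1(1) r2(1) m
      by (intro add_mono rate_power_bound gallager_key_nonneg[OF pmf] gallager_value_nonneg)
    also have "\<dots> \<le> 2 * max a1 a2 ^ n"
    proof -
      have "a1 ^ n \<le> max a1 a2 ^ n" "a2 ^ n \<le> max a1 a2 ^ n"
        using a by (auto intro: power_mono)
      then show ?thesis by simp
    qed
    finally show "\<exists>B g. err_prob p n (nat \<lceil>real n * R\<rceil>) B g \<le> 2 * max a1 a2 ^ n"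
      unfolding m_def by blast
  qed (use a in auto)
qed

text \<open>Entropy is nonnegative; this makes the candidate rates above the maximum nonnegative.\<close>

lemma entropy_K_nonneg:
  assumes pmf: "is_joint_pmf p"
  shows "entropy_K p \<ge> 0"
proof -
  have "law_K p c \<le> 1" for c
    using member_le_sum[of c UNIV "law_K p"] law_K_nonneg[OF pmf] sum_law_K[OF pmf] by simp
  then have "plogp (law_K p c) \<le> 0" for c
    using law_K_nonneg[OF pmf, of c]
    by (auto simp: plogp_def intro!: mult_nonneg_nonpos)
  then show ?thesis unfolding entropy_K_def by (simp add: sum_nonpos)
qed

theorem claim1:
  fixes p :: "bool \<Rightarrow> bool \<Rightarrow> real"
  assumes "is_joint_pmf p"
  shows "R_SW_sc p \<le> max (entropy_K p) (cond_entropy_V1_K p)"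
proof -
  have bdd: "bdd_below {R. achievable_common p R}"
    by (rule bdd_belowI[where m = 0]) (simp add: achievable_common_def)
  show ?thesis unfolding R_SW_sc_def
  proof (rule dense_ge)
    fix R assume R: "max (entropy_K p) (cond_entropy_V1_K p) < R"
    then have "achievable_common p R"
      using entropy_K_nonneg[OF assms] by (intro achievable_above_entropies[OF assms]) auto
    then show "Inf {R. achievable_common p R} \<le> R"
      by (intro cInf_lower bdd) simp
  qed
qed

end
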